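(* Let $S_1,S_2$ be two non-empty intervals of extended $\mathbb Z$-segments with $\mathrm{Supp}(S_1)=\mathrm{Supp}(S_2)$. Then: (a) $S_1\cap S_2$ is an interval; (b) there are at most $3$ intervals that are adjacent to $S_1$; (c) if $|S_1|>1$, $|S_2|>1$, $|S_1\cap S_2|=1$, and there exists an interval $S_1'$ adjacent to $S_1$ with $|S_1'\cap S_2|>0$, then $|S_1'\cap S_2|=2$.
   Context: A $\mathbb Z$-segment is $[A,B]=\{A,A-1,\dots,B\}$ with $A\ge B$ integers; its length is $b=A-B+1$. A virtual extended $\mathbb Z$-segment is a triple $([A,B],l,\eta)$ with $l\in\mathbb Z$, $l\le b/2$, and $\eta\in\{\pm1\}$, where if $b=2l$ the values $\eta$ and $-\eta$ are identified (otherwise not). It is an extended $\mathbb Z$-segment if moreover $l\ge0$. Its support is $\mathrm{Supp}=[A,B]$. Two virtual extended $\mathbb Z$-segments $([A_i,B_i],l_i,\eta_i)$ are adjacent if they have the same support and either there are lifts with $\eta_1=\eta_2$ and $|l_1-l_2|=1$, or $b$ is odd, $l_1=l_2=(b-1)/2$ and $\eta_1=-\eta_2$. A virtual interval is a finite set $\{\mathfrak e_1,\dots,\mathfrak e_r\}$ ($r\ge0$) of pairwise distinct virtual extended $\mathbb Z$-segments with $\mathfrak e_i$ adjacent to $\mathfrak e_{i+1}$ for all $i$; its support is the common support; an interval is a virtual interval consisting of extended $\mathbb Z$-segments. Two non-empty virtual intervals $S_1,S_2$ are adjacent if $S_1\cup S_2$ is a virtual interval and $|S_1|+1=|S_1\cup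 S_2|=|S_2|+1$. Two intervals $S_1,S_2$ are adjacent if there exist virtual intervals $S_1^+,S_2^+$ that are adjacent and satisfy $S_i=S_i^+\cap\{\text{extended }\mathbb Z\text{-segments}\}$. *)

theory Defs
  imports Main
begin

text \<open>The identification of eta and -eta when b = 2l is handled by choosing the
  canonical representative eta = 1 in that case (see vseg_valid).\<close>

datatype vseg = VSeg (segA: int) (segB: int) (segl: int) (segeta: int)

definition seg_len :: "vseg \<Rightarrow> int" where
  "seg_len e = segA e - segB e + 1"

definition seg_supp :: "vseg \<Rightarrow> int \<times> int" where
  "seg_supp e = (segA e, segB e)"

definition vseg_valid :: "vseg \<Rightarrow> bool" where
  "vseg_valid e \<longleftrightarrow> segA e \<ge> segB e \<and> 2 * segl e \<le> seg_len e
     \<and> segeta e \<in> {1, -1} \<and> (seg_len e = 2 * segl e \<longrightarrow> segeta e = 1)"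

definition eseg :: "vseg \<Rightarrow> bool" where
  "eseg e \<longleftrightarrow> vseg_valid e \<and> segl e \<ge> 0"

definition eta_lifts :: "vseg \<Rightarrow> int set" where
  "eta_lifts e = (if seg_len e = 2 * segl e then {1, -1} else {segeta e})"

definition vadj :: "vseg \<Rightarrow> vseg \<Rightarrow> bool" where
  "vadj e1 e2 \<longleftrightarrow> seg_supp e1 = seg_supp e2 \<and>
     (((\<exists>\<eta>\<in>eta_lifts e1. \<eta> \<in> eta_lifts e2) \<and> \<bar>segl e1 - segl e2\<bar> = 1)
      \<or> (odd (seg_len e1) \<and> 2 * segl e1 = seg_len e1 - 1 \<and> 2 * segl e2 = seg_len e1 - 1
          \<and> segeta e1 = - segeta e2))"

definition virtual_interval :: "vseg set \<Rightarrow> bool" where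
  "virtual_interval S \<longleftrightarrow> (\<forall>e\<in>S. vseg_valid e) \<and>
     (\<exists>xs. distinct xs \<and> set xs = S \<and> successively vadj xs)"

definition interval :: "vseg set \<Rightarrow> bool" where
  "interval S \<longleftrightarrow> virtual_interval S \<and> (\<forall>e\<in>S. eseg e)"

definition Supp :: "vseg set \<Rightarrow> int \<times> int" where
  "Supp S = (THE p. \<forall>e\<in>S. seg_supp e = p)"

definition vint_adj :: "vseg set \<Rightarrow> vseg set \<Rightarrow> bool" where
  "vint_adj S1 S2 \<longleftrightarrow> S1 \<noteq> {} \<and> S2 \<noteq> {} \<and> virtual_interval S1 \<and> virtual_interval S2
     \<and> virtual_interval (S1 \<union> S2)
     \<and> card S1 + 1 = card (S1 \<union> S2) \<and> card (S1 \<union> S2) = card S2 + 1"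

definition int_adj :: "vseg set \<Rightarrow> vseg set \<Rightarrow> bool" where
  "int_adj S1 S2 \<longleftrightarrow> interval S1 \<and> interval S2 \<and>
     (\<exists>T1 T2. vint_adj T1 T2 \<and> S1 = T1 \<inter> Collect eseg \<and> S2 = T2 \<inter> Collect eseg)"

end

theory Submission
  imports Defs
begin

text \<open>Fix a support [A,B] of length b. Reading off the position p = l (if \<eta> = 1) or p = b - l
  (if \<eta> = -1) identifies the virtual extended segments with this support with the integers; under
  this identification adjacency becomes |p - q| = 1 and being an extended segment becomes
  0 \<le> p \<le> b. Hence virtual intervals are integer intervals {m..n}, intervals are integer intervals
  inside {0..b}, and adjacent virtual intervals are shifts of each other by \<plusminus>1. Intersecting with
  {0..b} clips such a shift, which leaves at most three possibilities for an interval adjacent to a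
  given one; (a) and (c) become elementary statements about integer intervals.\<close>

definition vseg_at :: "int \<Rightarrow> int \<Rightarrow> int \<Rightarrow> vseg" where
  "vseg_at A B p = (if 2 * p \<le> A - B + 1 then VSeg A B p 1 else VSeg A B (A - B + 1 - p) (-1))"

definition vseg_pos :: "vseg \<Rightarrow> int" where
  "vseg_pos e = (if segeta e = 1 then segl e else seg_len e - segl e)"

lemma vseg_at_sel [simp]: "segA (vseg_at A B p) = A" "segB (vseg_at A B p) = B"
  by (auto simp: vseg_at_def)

lemma seg_supp_vseg_at [simp]: "seg_supp (vseg_at A B p) = (A, B)"
  by (simp add: seg_supp_def)

lemma inj_vseg_at: "inj (vseg_at A B)"
  by (rule injI) (auto simp: vseg_at_def split: if_splits)

lemma vseg_valid_vseg_at: "B \<le> A \<Longrightarrow> vseg_valid (vseg_at A B p)"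
  by (auto simp: vseg_at_def vseg_valid_def seg_len_def)

lemma eseg_vseg_at_iff: "B \<le> A \<Longrightarrow> eseg (vseg_at A B p) \<longleftrightarrow> 0 \<le> p \<and> p \<le> A - B + 1"
  by (auto simp: vseg_at_def eseg_def vseg_valid_def seg_len_def)

lemma vadj_vseg_at_iff: "B \<le> A \<Longrightarrow> vadj (vseg_at A B p) (vseg_at A B q) \<longleftrightarrow> \<bar>p - q\<bar> = 1"
  unfolding vadj_def vseg_at_def eta_lifts_def seg_len_def
  by (auto split: if_splits simp: seg_supp_def; presburger)

lemma vseg_at_vseg_pos: "vseg_valid e \<Longrightarrow> vseg_at (segA e) (segB e) (vseg_pos e) = e"
  by (cases e) (auto simp: vseg_at_def vseg_pos_def vseg_valid_def seg_len_def)

lemma vseg_at_image_eq_iff: "vseg_at A B ` I = vseg_at A B ` J \<longleftrightarrow> I = J"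
  by (simp add: inj_vseg_at inj_image_eq_iff)

lemma vseg_at_image_Int: "vseg_at A B ` I \<inter> vseg_at A B ` J = vseg_at A B ` (I \<inter> J)"
  by (simp add: inj_vseg_at image_Int)

lemma card_vseg_at_image: "card (vseg_at A B ` I) = card I"
  using inj_vseg_at by (simp add: card_image inj_on_def inj_def)

lemma vseg_at_image_Int_eseg:
  "B \<le> A \<Longrightarrow> vseg_at A B ` I \<inter> Collect eseg = vseg_at A B ` (I \<inter> {0..A - B + 1})"
  using eseg_vseg_at_iff by auto

lemma Supp_vseg_at_image: "I \<noteq> {} \<Longrightarrow> Supp (vseg_at A B ` I) = (A, B)"
  unfolding Supp_def by (rule the_equality) auto

lemma successively_eq_const:
  assumes "successively (\<lambda>a b. f a = f b) xs" "x \<in> set xs" "y \<in> set xs"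
  shows "f x = f y"
proof -
  have "sorted_wrt (\<lambda>a b. f a = f b) xs"
    using assms(1) by (subst (asm) successively_conv_sorted_wrt) (auto simp: transp_def)
  then have "x \<in> set xs \<Longrightarrow> f x = f (hd xs)" for x
    by (cases xs) auto
  then show ?thesis
    using assms(2,3) by metis
qed

lemma successively_upto: "successively (\<lambda>a b. b = a + 1) [m..n]"
  by (auto simp: successively_conv_nth)

lemma set_unit_step_walk:
  fixes ys :: "int list"
  assumes "successively (\<lambda>a b. \<bar>a - b\<bar> = 1) ys" "ys \<noteq> []"
  shows "\<exists>m n. m \<le> n \<and> set ys = {m..n}"
  using assms
proof (induction ys rule: induct_list012)
  case (3 y z zs)
  then obtain m n where mn: "m \<le> n" "set (z # zs) = {m..n}"
    by auto
  then have "m \<le> z" "z \<le> n"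
    using atLeastAtMost_iff list.set_intros(1) by metis+
  moreover have "\<bar>y - z\<bar> = 1"
    using "3.prems"(1) by simp
  ultimately have "set (y # z # zs) = {min y m..max y n}"
    unfolding list.set(2)[of y] mn(2)
    by (intro set_eqI) (simp only: insert_iff atLeastAtMost_iff; linarith)
  then show ?case
    by (metis max.cobounded1 min.cobounded1 order.trans)
next
  case (2 y)
  show ?case
    by (intro exI[of _ y]) simp
qed simp

lemma virtual_interval_imp_image_Icc:
  assumes "virtual_interval T" "e \<in> T"
  shows "segB e \<le> segA e \<and> (\<exists>m n. m \<le> n \<and> T = vseg_at (segA e) (segB e) ` {m..n})"
proof -
  obtain xs where xs: "distinct xs" "set xs = T" "successively vadj xs"
    and valid: "\<forall>e\<in>T. vseg_valid e"
    using assms(1) unfolding virtual_interval_def by auto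
  let ?at = "vseg_at (segA e) (segB e)"
  have AB: "segB e \<le> segA e"
    using valid assms(2) by (auto simp: vseg_valid_def)
  have "successively (\<lambda>a b. seg_supp a = seg_supp b) xs"
    using xs(3) by (rule successively_mono) (simp add: vadj_def)
  then have "seg_supp e' = seg_supp e" if "e' \<in> T" for e'
    by (rule successively_eq_const) (use that assms(2) xs(2) in auto)
  then have at_pos: "?at (vseg_pos e') = e'" if "e' \<in> T" for e'
    using vseg_at_vseg_pos[of e'] valid that by (simp add: seg_supp_def)
  have "successively (\<lambda>a b. \<bar>a - b\<bar> = 1) (map vseg_pos xs)"
    unfolding successively_map
  proof (rule successively_mono[OF xs(3)])
    fix a b
    assume "vadj a b" "a \<in> set xs" "b \<in> set xs"
    then have "vadj (?at (vseg_pos a)) (?at (vseg_pos b))"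
      using at_pos xs(2) by simp
    then show "\<bar>vseg_pos a - vseg_pos b\<bar> = 1"
      using vadj_vseg_at_iff[OF AB] by simp
  qed
  moreover have "map vseg_pos xs \<noteq> []"
    using xs(2) assms(2) by auto
  ultimately obtain m n where "m \<le> n" "set (map vseg_pos xs) = {m..n}"
    using set_unit_step_walk by blast
  moreover have "T = ?at ` set (map vseg_pos xs)"
    using at_pos xs(2) by force
  ultimately show ?thesis
    using AB by auto
qed

lemma virtual_interval_image_Icc: "B \<le> A \<Longrightarrow> virtual_interval (vseg_at A B ` {m..n})"
  unfolding virtual_interval_def
proof (intro conjI ballI exI)
  show "distinct (map (vseg_at A B) [m..n])"
    using inj_vseg_at by (simp add: distinct_map inj_on_def inj_def)
  show "set (map (vseg_at A B) [m..n]) = vseg_at A B ` {m..n}"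
    by simp
  assume "B \<le> A"
  show "successively vadj (map (vseg_at A B) [m..n])"
    unfolding successively_map using successively_upto
    by (rule successively_mono) (simp add: vadj_vseg_at_iff[OF \<open>B \<le> A\<close>])
qed (auto simp: vseg_valid_vseg_at)

lemma interval_image_Icc:
  "B \<le> A \<Longrightarrow> 0 \<le> m \<Longrightarrow> n \<le> A - B + 1 \<Longrightarrow> interval (vseg_at A B ` {m..n})"
  unfolding interval_def using virtual_interval_image_Icc eseg_vseg_at_iff by auto

lemma interval_imp_image_Icc:
  assumes "interval S" "S \<noteq> {}" "Supp S = (A, B)"
  obtains x y where "B \<le> A" "0 \<le> x" "x \<le> y" "y \<le> A - B + 1" "S = vseg_at A B ` {x..y}"
proof -
  obtain e where "e \<in> S"
    using assms(2) by auto
  then obtain x y where AB: "segB e \<le> segA e" and xy: "x \<le> y"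
    and S: "S = vseg_at (segA e) (segB e) ` {x..y}"
    using virtual_interval_imp_image_Icc assms(1) unfolding interval_def by blast
  then have "segA e = A" "segB e = B"
    using assms(3) Supp_vseg_at_image by auto
  moreover have "eseg (vseg_at A B x)" "eseg (vseg_at A B y)"
    using assms(1) xy S calculation unfolding interval_def by auto
  ultimately show thesis
    using that eseg_vseg_at_iff AB xy S by auto
qed

lemma Icc_adjacent_shift:
  fixes m1 n1 m2 n2 m n :: int
  assumes "m1 \<le> n1" "m2 \<le> n2" "{m1..n1} \<union> {m2..n2} = {m..n}"
    and "card {m1..n1} + 1 = card {m..n}" "card {m..n} = card {m2..n2} + 1"
  shows "(m2 = m1 + 1 \<and> n2 = n1 + 1) \<or> (m2 = m1 - 1 \<and> n2 = n1 - 1)"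
proof -
  have "{m1..n1} \<subseteq> {m..n}" "{m2..n2} \<subseteq> {m..n}"
    using assms(3) by blast+
  then have inside: "m \<le> m1" "n1 \<le> n" "m \<le> m2" "n2 \<le> n"
    using assms(1,2) by auto
  then have "m \<in> {m1..n1} \<union> {m2..n2}" "n \<in> {m1..n1} \<union> {m2..n2}"
    using assms(1,3) by auto
  moreover have "n1 - m1 = n - m - 1" "n2 - m2 = n - m - 1"
    using assms(1,2,4,5) inside by auto
  ultimately show ?thesis
    using inside by auto
qed

lemma vint_adj_imp_shift:
  assumes "vint_adj T1 T2" "e \<in> T1"
  defines "at \<equiv> vseg_at (segA e) (segB e)"
  shows "\<exists>m n m' n'. T1 = at ` {m..n} \<and> T2 = at ` {m'..n'}
    \<and> ((m' = m + 1 \<and> n' = n + 1) \<or> (m' = m - 1 \<and> n' = n - 1))"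
proof -
  have vi: "virtual_interval T1" "virtual_interval T2" "virtual_interval (T1 \<union> T2)" "T2 \<noteq> {}"
    and card: "card T1 + 1 = card (T1 \<union> T2)" "card (T1 \<union> T2) = card T2 + 1"
    using assms(1) unfolding vint_adj_def by auto
  obtain m1 n1 where T1: "m1 \<le> n1" "T1 = at ` {m1..n1}"
    using virtual_interval_imp_image_Icc[OF vi(1) assms(2)] unfolding at_def by auto
  obtain m n where T12: "T1 \<union> T2 = at ` {m..n}"
    using virtual_interval_imp_image_Icc[OF vi(3), of e] assms(2) unfolding at_def by auto
  obtain e' where e': "e' \<in> T2"
    using vi(4) by auto
  then obtain q where "e' = at q"
    using T12 by blast
  then have "segA e' = segA e" "segB e' = segB e"
    unfolding at_def by simp_all
  then obtain m2 n2 where T2: "m2 \<le> n2" "T2 = at ` {m2..n2}"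
    using virtual_interval_imp_image_Icc[OF vi(2) e'] unfolding at_def by auto
  have "{m1..n1} \<union> {m2..n2} = {m..n}"
    using T12 unfolding T1(2) T2(2) image_Un[symmetric] at_def vseg_at_image_eq_iff .
  moreover have "card {m1..n1} + 1 = card {m..n}" "card {m..n} = card {m2..n2} + 1"
    using card unfolding T12 unfolding T1(2) T2(2) at_def card_vseg_at_image by simp_all
  ultimately have "(m2 = m1 + 1 \<and> n2 = n1 + 1) \<or> (m2 = m1 - 1 \<and> n2 = n1 - 1)"
    by (rule Icc_adjacent_shift[OF T1(1) T2(1)])
  then show ?thesis
    using T1(2) T2(2) by blast
qed

text \<open>If {x..y} is the clipping of {m..n} to {0..b}, then m = x unless x = 0 and n = y unless y = b;
  these are the clippings of {m \<plusminus> 1..n \<plusminus> 1}.\<close>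

definition clipped_shifts :: "int \<Rightarrow> int \<Rightarrow> int \<Rightarrow> int set set" where
  "clipped_shifts b x y = {{x + 1..min (y + 1) b}, {max (x - 1) 0..y - 1}}
     \<union> (if x = 0 then {{0..min (y + 1) b}} else {})
     \<union> (if y = b then {{max (x - 1) 0..b}} else {})"

lemma finite_clipped_shifts: "finite (clipped_shifts b x y)"
  by (simp add: clipped_shifts_def)

lemma card_clipped_shifts_le: "card (clipped_shifts b x y) \<le> 3"
  by (simp add: clipped_shifts_def card_insert_if)

lemma clipped_shift_mem_clipped_shifts:
  fixes m n m' n' x y b :: int
  assumes "{x..y} = {max m 0..min n b}" "x \<le> y"
    and "(m' = m + 1 \<and> n' = n + 1) \<or> (m' = m - 1 \<and> n' = n - 1)"
  shows "{max m' 0..min n' b} \<in> clipped_shifts b x y"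
proof -
  have x: "x = max m 0" and y: "y = min n b"
    using assms(1,2) by (simp_all add: Icc_eq_Icc)
  from assms(3) show ?thesis
  proof
    assume up: "m' = m + 1 \<and> n' = n + 1"
    then have "min n' b = min (y + 1) b"
      using y by linarith
    moreover have "max m' 0 = x + 1 \<or> (x = 0 \<and> max m' 0 = 0)"
      using up x by linarith
    ultimately show ?thesis
      by (auto simp: clipped_shifts_def)
  next
    assume down: "m' = m - 1 \<and> n' = n - 1"
    then have "max m' 0 = max (x - 1) 0"
      using x by linarith
    moreover have "min n' b = y - 1 \<or> (y = b \<and> min n' b = b)"
      using down y by linarith
    ultimately show ?thesis
      by (auto simp: clipped_shifts_def)
  qed
qed

lemma int_adj_imp_clipped_shift:
  assumes "B \<le> A" "x \<le> y" "int_adj (vseg_at A B ` {x..y}) S"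
  shows "S \<in> image (vseg_at A B) ` clipped_shifts (A - B + 1) x y"
proof -
  obtain T1 T2 where T: "vint_adj T1 T2" "vseg_at A B ` {x..y} = T1 \<inter> Collect eseg"
    "S = T2 \<inter> Collect eseg"
    using assms(3) unfolding int_adj_def by blast
  have "vseg_at A B x \<in> T1 \<inter> Collect eseg"
    using T(2) assms(2) by (metis atLeastAtMost_iff image_eqI order_refl)
  then obtain m n m' n' where T1: "T1 = vseg_at A B ` {m..n}" and T2: "T2 = vseg_at A B ` {m'..n'}"
    and shift: "(m' = m + 1 \<and> n' = n + 1) \<or> (m' = m - 1 \<and> n' = n - 1)"
    using vint_adj_imp_shift[OF T(1), of "vseg_at A B x"] by auto
  have "{x..y} = {max m 0..min n (A - B + 1)}"
    using T(2) unfolding T1 vseg_at_image_Int_eseg[OF assms(1)] vseg_at_image_eq_iff by simp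
  then have "{max m' 0..min n' (A - B + 1)} \<in> clipped_shifts (A - B + 1) x y"
    by (rule clipped_shift_mem_clipped_shifts[OF _ assms(2) shift])
  moreover have "S = vseg_at A B ` {max m' 0..min n' (A - B + 1)}"
    using T(3) unfolding T2 vseg_at_image_Int_eseg[OF assms(1)] by simp
  ultimately show ?thesis
    by blast
qed

lemma interval_Int:
  assumes "interval S1" "interval S2" "S1 \<noteq> {}" "S2 \<noteq> {}" "Supp S1 = Supp S2"
  shows "interval (S1 \<inter> S2)"
proof -
  obtain A B where AB: "Supp S1 = (A, B)"
    by fastforce
  obtain x y where "B \<le> A" "0 \<le> x" "y \<le> A - B + 1" "S1 = vseg_at A B ` {x..y}"
    using interval_imp_image_Icc[OF assms(1,3) AB] by metis
  moreover obtain u v where "0 \<le> u" "v \<le> A - B + 1" "S2 = vseg_at A B ` {u..v}"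
    using interval_imp_image_Icc[OF assms(2,4)] AB assms(5) by metis
  ultimately show ?thesis
    using interval_image_Icc by (simp add: vseg_at_image_Int)
qed

lemma finite_card_int_adj_le_3:
  assumes "interval S1" "S1 \<noteq> {}"
  shows "finite {S. int_adj S1 S} \<and> card {S. int_adj S1 S} \<le> 3"
proof -
  obtain A B where "Supp S1 = (A, B)"
    by fastforce
  then obtain x y where AB: "B \<le> A" and xy: "x \<le> y" and S1: "S1 = vseg_at A B ` {x..y}"
    using interval_imp_image_Icc[OF assms] by metis
  let ?candidates = "image (vseg_at A B) ` clipped_shifts (A - B + 1) x y"
  have sub: "{S. int_adj S1 S} \<subseteq> ?candidates"
    using int_adj_imp_clipped_shift[OF AB xy] S1 by blast
  have fin: "finite ?candidates"
    by (simp add: finite_clipped_shifts)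
  have "card {S. int_adj S1 S} \<le> card ?candidates"
    by (rule card_mono[OF fin sub])
  also have "\<dots> \<le> card (clipped_shifts (A - B + 1) x y)"
    by (rule card_image_le[OF finite_clipped_shifts])
  also have "\<dots> \<le> 3"
    by (rule card_clipped_shifts_le)
  finally show ?thesis
    using finite_subset[OF sub fin] by simp
qed

lemma card_clipped_shift_Int_eq_2:
  fixes x y u v b :: int
  assumes "x < y" "u < v" "0 \<le> u" "v \<le> b" "card ({x..y} \<inter> {u..v}) = 1"
    and "K \<in> clipped_shifts b x y" "card (K \<inter> {u..v}) > 0"
  shows "card (K \<inter> {u..v}) = 2"
proof -
  have "min y v - max x u = 0"
    using assms(5) by simp
  then have "y = u \<or> v = x"
    using assms(1,2) by linarith
  then show ?thesis
    using assms by (auto simp: clipped_shifts_def max_def min_def split: if_splits)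
qed

lemma card_int_adj_Int_eq_2:
  assumes "interval S1" "interval S2" "S1 \<noteq> {}" "S2 \<noteq> {}" "Supp S1 = Supp S2"
    and "card S1 > 1" "card S2 > 1" "card (S1 \<inter> S2) = 1"
    and "int_adj S1 S1'" "card (S1' \<inter> S2) > 0"
  shows "card (S1' \<inter> S2) = 2"
proof -
  obtain A B where AB_Supp: "Supp S1 = (A, B)"
    by fastforce
  then obtain x y where AB: "B \<le> A" and xy: "x \<le> y" and S1: "S1 = vseg_at A B ` {x..y}"
    using interval_imp_image_Icc[OF assms(1,3)] by metis
  obtain u v where uv: "0 \<le> u" "v \<le> A - B + 1" and S2: "S2 = vseg_at A B ` {u..v}"
    using interval_imp_image_Icc[OF assms(2,4)] AB_Supp assms(5) by metis
  obtain K where K: "K \<in> clipped_shifts (A - B + 1) x y" and S1': "S1' = vseg_at A B ` K"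
    using int_adj_imp_clipped_shift[OF AB xy] assms(9) S1 by blast
  have "x < y" "u < v"
    using assms(6,7) unfolding S1 S2 card_vseg_at_image by auto
  moreover have "card ({x..y} \<inter> {u..v}) = 1" "card (K \<inter> {u..v}) > 0"
    using assms(8,10) unfolding S1 S2 S1' vseg_at_image_Int card_vseg_at_image by simp_all
  ultimately have "card (K \<inter> {u..v}) = 2"
    using card_clipped_shift_Int_eq_2[OF _ _ uv _ K] by blast
  then show ?thesis
    unfolding S2 S1' vseg_at_image_Int card_vseg_at_image .
qed

theorem lemma4p5:
  assumes "interval S1" and "interval S2" and "S1 \<noteq> {}" and "S2 \<noteq> {}"
    and "Supp S1 = Supp S2"
  shows "interval (S1 \<inter> S2)
    \<and> (finite {S. int_adj S1 S} \<and> card {S. int_adj S1 S} \<le> 3)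
    \<and> (card S1 > 1 \<and> card S2 > 1 \<and> card (S1 \<inter> S2) = 1 \<longrightarrow>
        (\<forall>S1'. int_adj S1 S1' \<and> card (S1' \<inter> S2) > 0 \<longrightarrow> card (S1' \<inter> S2) = 2))"
  using interval_Int[OF assms] finite_card_int_adj_le_3[OF assms(1,3)]
    card_int_adj_Int_eq_2[OF assms] by blast

end
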